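(* If for some $1\leq n<\omega$ the property $\mathrm{Gal}(\mathrm{Cub}_{\aleph_m},\aleph_m,2^{\aleph_m})$ fails for all $m\in[n,\omega)$, then $2^{\aleph_n}>\aleph_\omega$. In particular, $\aleph_\omega$ is not a strong limit cardinal.
   Context: $\mathrm{Cub}_\mu$ is the club filter on $\mu$. For a regular uncountable cardinal $\mu$, a cardinal $\lambda$ and a filter $\mathscr{F}$ over $\mu$, $\mathrm{Gal}(\mathscr{F},\mu,\lambda)$ means: every sequence $\langle A_\alpha\mid \alpha<\lambda\rangle$ of members of $\mathscr{F}$ has a set of indices $I\subseteq\lambda$ with $|I|=\mu$ and $\bigcap_{\alpha\in I}A_\alpha\in\mathscr{F}$. *)

theory Defs
  imports Main
begin

text \<open>Cardinals are represented, as in the HOL cardinal library, by cardinal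
  well-orders (Card_order r) on a carrier Field r inside some type.\<close>

fun is_aleph :: "nat \<Rightarrow> 'a rel \<Rightarrow> bool" where
  "is_aleph 0 r = (Card_order r \<and> ordIso2 r natLeq)"
| "is_aleph (Suc m) r = (Card_order r \<and> (\<exists>s::'a rel. is_aleph m s \<and> ordIso2 r (cardSuc s)))"

definition is_aleph_omega :: "'a rel \<Rightarrow> bool" where
  "is_aleph_omega w \<longleftrightarrow> Card_order w
     \<and> (\<forall>m (s::'a rel). is_aleph m s \<longrightarrow> ordLess2 s w)
     \<and> (\<forall>t::'a rel. Card_order t \<and> (\<forall>m (s::'a rel). is_aleph m s \<longrightarrow> ordLess2 s t)
            \<longrightarrow> ordLeq3 w t)"

definition strong_limit :: "'a rel \<Rightarrow> bool" where
  "strong_limit w \<longleftrightarrow> (\<forall>s::'a rel. Card_order s \<and> ordLess2 s w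
      \<longrightarrow> ordLess2 (card_of (Pow (Field s))) w)"

definition is_lub :: "'a rel \<Rightarrow> 'a set \<Rightarrow> 'a \<Rightarrow> bool" where
  "is_lub mu B d \<longleftrightarrow> d \<in> Field mu \<and> (\<forall>b\<in>B. (b, d) \<in> mu)
     \<and> (\<forall>d'\<in>Field mu. (\<forall>b\<in>B. (b, d') \<in> mu) \<longrightarrow> (d, d') \<in> mu)"

definition unbounded :: "'a rel \<Rightarrow> 'a set \<Rightarrow> bool" where
  "unbounded mu C \<longleftrightarrow> (\<forall>a\<in>Field mu. \<exists>b\<in>C. (a, b) \<in> mu \<and> a \<noteq> b)"

definition closed :: "'a rel \<Rightarrow> 'a set \<Rightarrow> bool" where
  "closed mu C \<longleftrightarrow> (\<forall>B d. B \<subseteq> C \<and> B \<noteq> {} \<and> is_lub mu B d \<longrightarrow> d \<in> C)"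

definition club :: "'a rel \<Rightarrow> 'a set \<Rightarrow> bool" where
  "club mu C \<longleftrightarrow> C \<subseteq> Field mu \<and> unbounded mu C \<and> closed mu C"

definition Cub :: "'a rel \<Rightarrow> 'a set set" where
  "Cub mu = {A. A \<subseteq> Field mu \<and> (\<exists>C. club mu C \<and> C \<subseteq> A)}"

text \<open>Gal(F, mu, lambda), where lambda is given as an index set L with |L| = lambda.\<close>
definition Gal :: "'a set set \<Rightarrow> 'a rel \<Rightarrow> 'i set \<Rightarrow> bool" where
  "Gal F mu L \<longleftrightarrow> (\<forall>A :: 'i \<Rightarrow> 'a set. (\<forall>i\<in>L. A i \<in> F) \<longrightarrow>
      (\<exists>I\<subseteq>L. ordIso2 (card_of I) mu \<and> \<Inter>(A ` I) \<in> F))"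

end

theory Submission
  imports Defs
begin

text \<open>Galvin's argument: let \<mu> = \<kappa>+ with \<kappa> infinite and 2^\<kappa> < \<lambda>, and let clubs
  C \<beta> (\<beta> < \<lambda>) be given. Below each \<delta> < \<mu> there are only 2^\<kappa> possible traces
  C \<beta> \<inter> \<delta>, so some \<beta>0 shares its trace below every \<delta> with \<mu> many \<beta>. Choosing
  distinct such \<alpha> \<delta> by recursion on \<delta>, the club C \<beta>0 \<inter> \<Delta>(\<delta> < \<mu>). C (\<alpha> \<delta>) lies inside
  every C (\<alpha> \<delta>): this is Gal(Cub \<mu>, \<mu>, \<lambda>).

  Hence if Gal fails at every \<aleph>(m + 1) with m \<ge> n, then 2^\<aleph>(m + 1) \<le> 2^\<aleph>(m) for
  all m \<ge> n, so 2^\<aleph>(n) exceeds every \<aleph>(m) and \<aleph>(\<omega>) \<le> 2^\<aleph>(n). Equality is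
  impossible: \<aleph>(\<omega>) is a countable union of smaller sets, whereas 2^\<aleph>(n), being equal
  to its own \<aleph>(0)-th power, is not (Koenig).\<close>

unbundle cardinal_syntax

lemma Well_order_refl: "Well_order r \<Longrightarrow> x \<in> Field r \<Longrightarrow> (x, x) \<in> r"
  by (meson order_on_defs refl_onD)

lemma Well_order_trans: "Well_order r \<Longrightarrow> (x, y) \<in> r \<Longrightarrow> (y, z) \<in> r \<Longrightarrow> (x, z) \<in> r"
  by (meson order_on_defs transD)

lemma Well_order_antisym: "Well_order r \<Longrightarrow> (x, y) \<in> r \<Longrightarrow> (y, x) \<in> r \<Longrightarrow> x = y"
  by (meson order_on_defs antisymD)

lemma Well_order_le_of_notin_underS:
  "Well_order r \<Longrightarrow> x \<in> Field r \<Longrightarrow> y \<in> Field r \<Longrightarrow> y \<notin> underS r x \<Longrightarrow> (x, y) \<in> r"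
  unfolding underS_def by (auto intro: wo_rel.in_notinI simp: wo_rel_def)

lemma Well_order_under_underS_trans:
  assumes wo: "Well_order r" and xy: "(x, y) \<in> r" and yz: "y \<in> underS r z"
  shows "x \<in> underS r z"
proof -
  have "(y, z) \<in> r" "y \<noteq> z" using yz unfolding underS_def by auto
  then have "(x, z) \<in> r" "x \<noteq> z"
    using Well_order_trans[OF wo xy] Well_order_antisym[OF wo xy] by auto
  then show ?thesis unfolding underS_def by simp
qed

lemma Well_order_underS_under_trans:
  "Well_order r \<Longrightarrow> x \<in> underS r y \<Longrightarrow> (y, z) \<in> r \<Longrightarrow> x \<in> underS r z"
  using underS_incr by (metis order_on_defs subsetD)

lemma Well_order_chain_le:
  assumes wo: "Well_order s" and succ: "\<And>n. (xs n, xs (Suc n)) \<in> s" and "i \<le> j"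
  shows "(xs i, xs j) \<in> s"
  using \<open>i \<le> j\<close>
proof (induction j rule: dec_induct)
  case base
  show ?case using Well_order_refl[OF wo FieldI1[OF succ]] .
next
  case (step j)
  from step.IH show ?case by (rule Well_order_trans[OF wo _ succ])
qed

lemma is_lub_exists:
  assumes wo: "Well_order s" and g: "g \<in> Field s" "\<forall>b\<in>B. (b, g) \<in> s"
  obtains d where "is_lub s B d"
proof -
  interpret wo_rel s using wo by (simp add: wo_rel_def)
  let ?U = "{d \<in> Field s. \<forall>b\<in>B. (b, d) \<in> s}"
  have U: "?U \<subseteq> Field s" "?U \<noteq> {}" using g by auto
  have "minim ?U \<in> ?U" by (rule minim_in[OF U])
  moreover have "(minim ?U, d') \<in> s" if "d' \<in> ?U" for d'
    using minim_least[OF U(1) that] .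
  ultimately have "is_lub s B (minim ?U)" unfolding is_lub_def by simp
  then show thesis by (rule that)
qed

lemma is_lub_interleaved:
  assumes wo: "Well_order s" and lub: "is_lub s B d"
    and below: "\<forall>b'\<in>B'. \<exists>b\<in>B. (b', b) \<in> s" and above: "\<forall>b\<in>B. \<exists>b'\<in>B'. (b, b') \<in> s"
  shows "is_lub s B' d"
  unfolding is_lub_def
proof (intro conjI ballI impI)
  show "d \<in> Field s" using lub unfolding is_lub_def by blast
next
  fix b' assume "b' \<in> B'"
  then obtain b where b: "b \<in> B" "(b', b) \<in> s" using below by blast
  have "(b, d) \<in> s" using lub b(1) unfolding is_lub_def by blast
  then show "(b', d) \<in> s" by (rule Well_order_trans[OF wo b(2)])
next
  fix d' assume d': "d' \<in> Field s" "\<forall>b'\<in>B'. (b', d') \<in> s"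
  have "(b, d') \<in> s" if b: "b \<in> B" for b
  proof -
    obtain b' where "b' \<in> B'" "(b, b') \<in> s" using above b by blast
    then show ?thesis using Well_order_trans[OF wo \<open>(b, b') \<in> s\<close>] d'(2) by blast
  qed
  then show "(d, d') \<in> s" using lub d'(1) unfolding is_lub_def by blast
qed

lemma is_lub_above_subset:
  assumes wo: "Well_order s" and lub: "is_lub s B d" and B: "B \<subseteq> Field s"
    and \<delta>: "\<delta> \<in> underS s d"
  shows "{b \<in> B. \<delta> \<in> underS s b} \<noteq> {}" "is_lub s {b \<in> B. \<delta> \<in> underS s b} d"
proof -
  have \<delta>F: "\<delta> \<in> Field s" using \<delta> underS_Field by fast
  have "\<exists>b\<in>B. \<delta> \<in> underS s b"
  proof (rule ccontr)
    assume "\<not> ?thesis"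
    then have "\<forall>b\<in>B. (b, \<delta>) \<in> s" using Well_order_le_of_notin_underS[OF wo] B \<delta>F by blast
    then have "(d, \<delta>) \<in> s" using lub \<delta>F unfolding is_lub_def by blast
    then show False using \<delta> Well_order_antisym[OF wo] unfolding underS_def by blast
  qed
  then obtain b0 where b0: "b0 \<in> B" "\<delta> \<in> underS s b0" by blast
  then show "{b \<in> B. \<delta> \<in> underS s b} \<noteq> {}" by blast
  show "is_lub s {b \<in> B. \<delta> \<in> underS s b} d"
  proof (rule is_lub_interleaved[OF wo lub])
    show "\<forall>b'\<in>{b \<in> B. \<delta> \<in> underS s b}. \<exists>b\<in>B. (b', b) \<in> s" using Well_order_refl[OF wo] B by blast
    show "\<forall>b\<in>B. \<exists>b'\<in>{b \<in> B. \<delta> \<in> underS s b}. (b, b') \<in> s"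
    proof
      fix b assume b: "b \<in> B"
      show "\<exists>b'\<in>{b \<in> B. \<delta> \<in> underS s b}. (b, b') \<in> s"
      proof (cases "\<delta> \<in> underS s b")
        case True
        then show ?thesis using b Well_order_refl[OF wo] B by blast
      next
        case False
        then have "(b, \<delta>) \<in> s" using Well_order_le_of_notin_underS[OF wo] b B \<delta>F by blast
        then have "b \<in> underS s b0" by (rule Well_order_under_underS_trans[OF wo _ b0(2)])
        then show ?thesis using b0 unfolding underS_def by blast
      qed
    qed
  qed
qed

lemma card_of_Pow_mono: "|A| \<le>o |B| \<Longrightarrow> |Pow A| \<le>o |Pow B|"
proof -
  assume "|A| \<le>o |B|"
  then obtain f where f: "inj_on f A" "f ` A \<subseteq> B" using card_of_ordLeq by metis
  then have "inj_on (image f) (Pow A)" "image f ` Pow A \<subseteq> Pow B"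
    using inj_on_image_Pow image_Pow_mono by blast+
  then show ?thesis using card_of_ordLeq by blast
qed

lemma card_of_Pow_cong: "|A| =o |B| \<Longrightarrow> |Pow A| =o |Pow B|"
  by (meson card_of_Pow_mono ordIso_iff_ordLeq)

lemma card_of_insert_ordLess:
  assumes s: "Card_order s" "\<not> finite (Field s)" and X: "|X| <o s"
  shows "|insert a X| <o s"
proof -
  have "|{a}| <o s"
    by (rule finite_ordLess_infinite[OF card_of_Well_order card_order_on_well_order_on[OF s(1)]])
      (simp_all add: s(2) Field_card_of)
  then have "|{a} \<union> X| <o s" using X by (rule card_of_Un_ordLess_infinite_Field[OF s(2,1)])
  then show ?thesis by simp
qed

lemma card_of_under_ordLess:
  assumes s: "Card_order s" "\<not> finite (Field s)" and x: "x \<in> Field s"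
  shows "|under s x| <o s"
proof -
  have wo: "Well_order s" using s(1) by (rule card_order_on_well_order_on)
  obtain y where y: "y \<in> Field s" "x \<in> underS s y"
    using infinite_Card_order_limit[OF s x] unfolding underS_def by blast
  have "under s x \<subseteq> underS s y"
    using Well_order_under_underS_trans[OF wo _ y(2)] unfolding under_def by blast
  then show ?thesis by (rule ordLeq_ordLess_trans[OF card_of_mono1 card_of_underS[OF s(1) y(1)]])
qed

lemma ordLess_ordLeq_card_of_underS:
  assumes w: "Card_order w" and s: "Card_order s" "s <o w"
  obtains a where "a \<in> Field w" "s \<le>o |underS w a|"
proof -
  obtain a where a: "a \<in> Field w" and iso: "s =o Restr w (underS w a)"
    using ordLess_iff_ordIso_Restr[OF card_order_on_well_order_on[OF w]
        card_order_on_well_order_on[OF s(1)]] s(2) by blast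
  have "s =o |Field s|" by (rule ordIso_symmetric[OF card_of_Field_ordIso[OF s(1)]])
  also have "|Field s| =o |Field (Restr w (underS w a))|" by (rule card_of_cong[OF iso])
  also have "|Field (Restr w (underS w a))| \<le>o |underS w a|" by (rule card_of_mono1[OF Field_Restr_subset])
  finally show thesis using a that by blast
qed

lemma natLeq_ordLess_infinite_Field: "natLeq <o s \<Longrightarrow> \<not> finite (Field s)"
  using cinfinite_mono[OF ordLess_imp_ordLeq natLeq_cinfinite] unfolding cinfinite_def by blast

lemma cardSuc_infinite_Field:
  assumes t: "Card_order t" "\<not> finite (Field t)" and st: "s =o cardSuc t"
  shows "\<not> finite (Field s)"
proof -
  have "t <o s" by (rule ordLess_ordIso_trans[OF cardSuc_greater[OF t(1)] ordIso_symmetric[OF st]])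
  then show ?thesis using card_of_ordLeq_infinite[OF card_of_mono2 t(2)] ordLess_imp_ordLeq by blast
qed

lemma cardSuc_regularCard:
  assumes t: "Card_order t" "\<not> finite (Field t)" and st: "s =o cardSuc t"
  shows "regularCard s"
proof -
  have "Cinfinite t" using t by (simp add: cinfinite_def)
  then show ?thesis
    by (rule regularCard_ordIso[OF ordIso_symmetric[OF st] Cinfinite_cardSuc
          infinite_cardSuc_regularCard[OF t(2,1)]])
qed

lemma natLeq_ordLess_cardSuc:
  assumes t: "Card_order t" "\<not> finite (Field t)" and st: "s =o cardSuc t"
  shows "natLeq <o s"
proof -
  have "natLeq \<le>o t" using t by (simp add: natLeq_ordLeq_cinfinite cinfinite_def)
  also have "t <o s" by (rule ordLess_ordIso_trans[OF cardSuc_greater[OF t(1)] ordIso_symmetric[OF st]])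
  finally show ?thesis .
qed

lemma card_of_under_cardSuc:
  assumes s: "Card_order s" and t: "Card_order t" "\<not> finite (Field t)"
    and st: "s =o cardSuc t" and x: "x \<in> Field s"
  shows "|under s x| \<le>o |Field t|"
proof -
  have "|under s x| <o cardSuc t"
    using card_of_under_ordLess[OF s cardSuc_infinite_Field[OF t st] x] st
    by (rule ordLess_ordIso_trans)
  then have "|under s x| \<le>o t" by (simp add: cardSuc_ordLeq_ordLess[OF t(1) card_of_Card_order])
  then show ?thesis by (rule ordLeq_ordIso_trans[OF _ ordIso_symmetric[OF card_of_Field_ordIso[OF t(1)]]])
qed

lemma card_of_Field_cardSuc_ordLeq_Pow:
  assumes s: "Card_order s" and t: "Card_order t" and st: "s =o cardSuc t"
  shows "|Field s| \<le>o |Pow (Field t)|"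
proof -
  have "t <o |Pow (Field t)|"
    by (rule ordIso_ordLess_trans[OF ordIso_symmetric[OF card_of_Field_ordIso[OF t]] card_of_Pow])
  then have "cardSuc t \<le>o |Pow (Field t)|" by (rule cardSuc_least[OF t card_of_Card_order])
  then show ?thesis by (rule ordIso_ordLeq_trans[OF ordIso_transitive[OF card_of_Field_ordIso[OF s] st]])
qed

lemma regularCard_strict_upper_bound:
  assumes s: "Card_order s" "regularCard s" "\<not> finite (Field s)"
    and K: "K \<subseteq> Field s" "|K| <o s"
  obtains g where "g \<in> Field s" "K \<subseteq> underS s g"
proof -
  have wo: "Well_order s" using s(1) by (rule card_order_on_well_order_on)
  have "\<not> cofinal K s"
    using s(2) K unfolding regularCard_def using not_ordLess_ordIso by blast
  then obtain a where a: "a \<in> Field s" and "\<forall>b\<in>K. a \<notin> underS s b"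
    unfolding cofinal_def underS_def by auto
  then have below_a: "(b, a) \<in> s" if "b \<in> K" for b
    using Well_order_le_of_notin_underS[OF wo] K(1) that by blast
  obtain g where "g \<in> Field s" "a \<in> underS s g"
    using infinite_Card_order_limit[OF s(1,3) a] unfolding underS_def by blast
  moreover have "K \<subseteq> underS s g"
    using Well_order_under_underS_trans[OF wo below_a calculation(2)] by blast
  ultimately show thesis using that by blast
qed

lemma regularCard_closing_sequence:
  assumes s: "Card_order s" "regularCard s" "natLeq <o s"
    and K: "\<forall>x\<in>Field s. K x \<subseteq> Field s \<and> |K x| <o s" and a: "a \<in> Field s"
  obtains xs :: "nat \<Rightarrow> 'a" and d where "xs 0 = a" "\<And>n. K (xs n) \<subseteq> underS s (xs (Suc n))"
    "\<And>i j. i \<le> j \<Longrightarrow> (xs i, xs j) \<in> s" "is_lub s (range xs) d" "a \<in> underS s d"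
proof -
  have wo: "Well_order s" using s(1) by (rule card_order_on_well_order_on)
  have inf: "\<not> finite (Field s)" using s(3) by (rule natLeq_ordLess_infinite_Field)
  have "\<forall>x\<in>Field s. \<exists>g. g \<in> Field s \<and> insert x (K x) \<subseteq> underS s g"
  proof
    fix x assume x: "x \<in> Field s"
    have "insert x (K x) \<subseteq> Field s" using K x by blast
    moreover have "|insert x (K x)| <o s" by (rule card_of_insert_ordLess[OF s(1) inf]) (use K x in blast)
    ultimately obtain g where "g \<in> Field s" "insert x (K x) \<subseteq> underS s g"
      by (rule regularCard_strict_upper_bound[OF s(1,2) inf])
    then show "\<exists>g. g \<in> Field s \<and> insert x (K x) \<subseteq> underS s g" by blast
  qed
  then obtain nxt where nxt: "\<forall>x\<in>Field s. nxt x \<in> Field s \<and> insert x (K x) \<subseteq> underS s (nxt x)"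
    by (elim bchoice[elim_format] exE)
  define xs where "xs n = (nxt ^^ n) a" for n
  have xsF: "xs n \<in> Field s" for n
    by (induction n) (use a nxt in \<open>auto simp: xs_def\<close>)
  have xs_step: "insert (xs n) (K (xs n)) \<subseteq> underS s (xs (Suc n))" for n
    using nxt xsF[of n] by (simp add: xs_def)
  have succ: "(xs n, xs (Suc n)) \<in> s" for n using xs_step[of n] unfolding underS_def by blast
  have "range xs \<subseteq> Field s" using xsF by blast
  moreover have "|range xs| <o s"
    by (rule ordLeq_ordLess_trans[OF card_of_image ordIso_ordLess_trans[OF card_of_nat s(3)]])
  ultimately obtain g where "g \<in> Field s" "range xs \<subseteq> underS s g"
    by (rule regularCard_strict_upper_bound[OF s(1,2) inf])
  then obtain d where lub: "is_lub s (range xs) d"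
    using is_lub_exists[OF wo] unfolding underS_def by blast
  have xs0: "xs 0 = a" by (simp add: xs_def)
  have "a \<in> underS s (xs (Suc 0))" using xs_step[of 0] xs0 by simp
  moreover have "(xs (Suc 0), d) \<in> s" using lub unfolding is_lub_def by blast
  ultimately have ad: "a \<in> underS s d" by (rule Well_order_underS_under_trans[OF wo])
  show thesis
    by (rule that[OF xs0 _ Well_order_chain_le[where xs = xs, OF wo succ] lub ad]) (use xs_step in blast)
qed

section \<open>Koenig's theorem for countable unions\<close>

lemma card_of_Func_nat_Pow:
  assumes "\<not> finite A"
  shows "|Func (UNIV :: nat set) (Pow A)| \<le>o |Pow A|"
proof -
  have "inj_on (\<lambda>f. Sigma UNIV f) (Func (UNIV :: nat set) (Pow A))"
  proof (rule inj_onI)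
    fix f g :: "nat \<Rightarrow> 'a set" assume "Sigma UNIV f = Sigma UNIV g"
    then show "f = g" by (intro ext set_eqI) (metis SigmaD2 SigmaI UNIV_I)
  qed
  moreover have "(\<lambda>f. Sigma UNIV f) ` Func (UNIV :: nat set) (Pow A) \<subseteq> Pow (UNIV \<times> A)"
    unfolding Func_def by blast
  ultimately have "|Func (UNIV :: nat set) (Pow A)| \<le>o |Pow ((UNIV :: nat set) \<times> A)|"
    using card_of_ordLeq by blast
  also have "|Pow ((UNIV :: nat set) \<times> A)| \<le>o |Pow A|"
  proof (rule card_of_Pow_mono)
    have "|(UNIV :: nat set)| \<le>o |A|" using assms infinite_iff_card_of_nat by blast
    then have "|(UNIV :: nat set) \<times> A| \<le>o |A \<times> A|" by (rule card_of_Times_mono1)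
    also have "|A \<times> A| =o |A|" by (rule card_of_Times_same_infinite[OF assms])
    finally show "|(UNIV :: nat set) \<times> A| \<le>o |A|" .
  qed
  finally show ?thesis .
qed

lemma not_subset_UNION_of_smaller:
  fixes P :: "'b set" and Y :: "nat \<Rightarrow> 'b set"
  assumes Func: "|Func (UNIV :: nat set) P| \<le>o |P|" and small: "\<And>k. |Y k| <o |P|"
  shows "\<not> P \<subseteq> (\<Union>k. Y k)"
proof
  assume cover: "P \<subseteq> (\<Union>k. Y k)"
  obtain e :: "(nat \<Rightarrow> 'b) \<Rightarrow> 'b" where e: "inj_on e (Func UNIV P)" "e ` Func UNIV P \<subseteq> P"
    using Func card_of_ordLeq[of "Func UNIV P" P] by blast
  define V where "V k = (\<lambda>f. f k) ` {f \<in> Func UNIV P. e f \<in> Y k}" for k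
  have "|V k| <o |P|" for k
  proof -
    let ?F = "{f \<in> Func UNIV P. e f \<in> Y k}"
    have "inj_on e ?F" by (rule inj_on_subset[OF e(1)]) blast
    moreover have "e ` ?F \<subseteq> Y k" by blast
    ultimately have F_Y: "|?F| \<le>o |Y k|" using card_of_ordLeq[of ?F "Y k"] by blast
    have "|V k| \<le>o |?F|" unfolding V_def by (rule card_of_image)
    also have "|?F| \<le>o |Y k|" by (rule F_Y)
    also have "|Y k| <o |P|" by (rule small)
    finally show ?thesis .
  qed
  then have "\<not> P \<subseteq> V k" for k using card_of_mono1 not_ordLess_ordLeq by blast
  then have "\<exists>y. y \<in> P \<and> y \<notin> V k" for k by blast
  then obtain z where z: "\<And>k. z k \<in> P \<and> z k \<notin> V k" by metis
  have zF: "z \<in> Func UNIV P" unfolding Func_def using z by simp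
  then obtain k where "e z \<in> Y k" using e(2) cover by blast
  then have "z k \<in> V k" using zF unfolding V_def by blast
  then show False using z by blast
qed

lemma is_aleph_Card_order: "is_aleph m s \<Longrightarrow> Card_order s"
  by (cases m) simp_all

lemma natLeq_ordLeq_is_aleph: "is_aleph m s \<Longrightarrow> natLeq \<le>o s"
proof (induction m arbitrary: s)
  case 0
  then show ?case by (simp add: ordIso_imp_ordLeq ordIso_symmetric)
next
  case (Suc m)
  then obtain t :: "'a rel" where t: "is_aleph m t" "s =o cardSuc t" by auto
  have "natLeq \<le>o t" by (rule Suc.IH[OF t(1)])
  also have "t \<le>o cardSuc t" by (rule cardSuc_ordLeq[OF is_aleph_Card_order[OF t(1)]])
  also have "cardSuc t =o s" by (rule ordIso_symmetric[OF t(2)])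
  finally show ?case .
qed

lemma is_aleph_infinite: "is_aleph m s \<Longrightarrow> \<not> finite (Field s)"
  using cinfinite_mono[OF natLeq_ordLeq_is_aleph natLeq_cinfinite] unfolding cinfinite_def by blast

lemma is_aleph_unique: "is_aleph m (s :: 'a rel) \<Longrightarrow> is_aleph m (s' :: 'a rel) \<Longrightarrow> s =o s'"
proof (induction m arbitrary: s s')
  case 0
  then show ?case by (auto intro: ordIso_transitive ordIso_symmetric)
next
  case (Suc m)
  obtain t :: "'a rel" where t: "is_aleph m t" "s =o cardSuc t" using Suc.prems(1) by auto
  obtain t' :: "'a rel" where t': "is_aleph m t'" "s' =o cardSuc t'" using Suc.prems(2) by auto
  have "cardSuc t =o cardSuc t'"
    using cardSuc_invar_ordIso[OF is_aleph_Card_order[OF t(1)] is_aleph_Card_order[OF t'(1)]]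
      Suc.IH[OF t(1) t'(1)] by blast
  then show ?case by (rule ordIso_transitive[OF ordIso_transitive[OF t(2)] ordIso_symmetric[OF t'(2)]])
qed

lemma is_aleph_Suc_ordLess: "is_aleph m (s :: 'a rel) \<Longrightarrow> is_aleph (Suc m) (s' :: 'a rel) \<Longrightarrow> s <o s'"
proof -
  assume s: "is_aleph m s" and "is_aleph (Suc m) s'"
  then obtain t :: "'a rel" where t: "is_aleph m t" "s' =o cardSuc t" by auto
  have "s =o t" by (rule is_aleph_unique[OF s t(1)])
  also have "t <o cardSuc t" by (rule cardSuc_greater[OF is_aleph_Card_order[OF t(1)]])
  also have "cardSuc t =o s'" by (rule ordIso_symmetric[OF t(2)])
  finally show "s <o s'" .
qed

lemma is_aleph_mono: "m \<le> k \<Longrightarrow> is_aleph m (s :: 'a rel) \<Longrightarrow> is_aleph k (s' :: 'a rel) \<Longrightarrow> s \<le>o s'"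
proof (induction k arbitrary: s')
  case 0
  then show ?case using is_aleph_unique ordIso_imp_ordLeq by blast
next
  case (Suc k)
  show ?case
  proof (cases "m = Suc k")
    case True
    then show ?thesis using Suc.prems is_aleph_unique ordIso_imp_ordLeq by blast
  next
    case False
    obtain t :: "'a rel" where t: "is_aleph k t" "s' =o cardSuc t" using Suc.prems(3) by auto
    have "s \<le>o t" using False Suc.prems(1,2) t(1) by (intro Suc.IH) simp_all
    also have "t <o s'" by (rule is_aleph_Suc_ordLess[OF t(1) Suc.prems(3)])
    finally show ?thesis by (rule ordLess_imp_ordLeq)
  qed
qed

lemma Card_order_ordIso_copy:
  fixes q :: "'b rel" and w :: "'a rel"
  assumes q: "Card_order q" and qw: "q \<le>o w"
  obtains p :: "'a rel" where "Card_order p" "p =o q"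
proof -
  have "|Field q| \<le>o |Field w|" using card_of_mono2[OF qw] .
  also have "|Field w| \<le>o |UNIV :: 'a set|" by (rule card_of_mono1) simp
  finally obtain f :: "'b \<Rightarrow> 'a" where f: "inj_on f (Field q)"
    using card_of_ordLeq[of "Field q" "UNIV :: 'a set"] by auto
  then have "|f ` Field q| =o |Field q|" using card_of_ordIso inj_on_imp_bij_betw ordIso_symmetric by blast
  also have "|Field q| =o q" by (rule card_of_Field_ordIso[OF q])
  finally show thesis using that card_of_Card_order by blast
qed

lemma is_aleph_omega_Card_order: "is_aleph_omega w \<Longrightarrow> Card_order w"
  unfolding is_aleph_omega_def by blast

lemma is_aleph_omega_greater: "is_aleph_omega (w :: 'a rel) \<Longrightarrow> is_aleph m (s :: 'a rel) \<Longrightarrow> s <o w"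
  unfolding is_aleph_omega_def by blast

lemma is_aleph_omega_least:
  "is_aleph_omega (w :: 'a rel) \<Longrightarrow> Card_order (t :: 'a rel)
    \<Longrightarrow> (\<And>m (s :: 'a rel). is_aleph m s \<Longrightarrow> s <o t) \<Longrightarrow> w \<le>o t"
  unfolding is_aleph_omega_def by blast

lemma is_aleph_exists:
  fixes w :: "'a rel"
  assumes w: "is_aleph_omega w" and nat_w: "natLeq \<le>o w"
  shows "\<exists>s :: 'a rel. is_aleph m s"
proof (induction m)
  case 0
  obtain p :: "'a rel" where "Card_order p" "p =o natLeq"
    using Card_order_ordIso_copy[OF natLeq_Card_order nat_w] by blast
  then show ?case by auto
next
  case (Suc m)
  then obtain s :: "'a rel" where s: "is_aleph m s" by blast
  have "cardSuc s \<le>o w"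
    by (rule cardSuc_least[OF is_aleph_Card_order[OF s] is_aleph_omega_Card_order[OF w]
          is_aleph_omega_greater[OF w s]])
  then obtain p :: "'a rel" where "Card_order p" "p =o cardSuc s"
    using Card_order_ordIso_copy[OF cardSuc_Card_order[OF is_aleph_Card_order[OF s]]] by blast
  then show ?case using s by auto
qed

lemma is_aleph_omega_cofinal_sequence:
  fixes w :: "'a rel" and S :: "nat \<Rightarrow> 'a rel"
  assumes w: "is_aleph_omega w" and S: "\<And>m. is_aleph m (S m)"
  obtains a :: "nat \<Rightarrow> 'a" where "range a \<subseteq> Field w" "Field w \<subseteq> (\<Union>k. underS w (a k))"
proof -
  have wC: "Card_order w" by (rule is_aleph_omega_Card_order[OF w])
  have wo: "Well_order w" using wC by (rule card_order_on_well_order_on)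
  have "\<forall>k. \<exists>a. a \<in> Field w \<and> S k \<le>o |underS w a|"
    using ordLess_ordLeq_card_of_underS[OF wC is_aleph_Card_order[OF S] is_aleph_omega_greater[OF w S]]
    by metis
  then obtain a where a: "\<And>k. a k \<in> Field w" "\<And>k. S k \<le>o |underS w (a k)|" by metis
  have "x \<in> (\<Union>k. underS w (a k))" if x: "x \<in> Field w" for x
  proof -
    have "\<exists>k. |underS w x| \<le>o S k"
    proof (rule ccontr)
      assume "\<not> ?thesis"
      then have "S k <o |underS w x|" for k
        using not_ordLeq_iff_ordLess[OF card_order_on_well_order_on[OF is_aleph_Card_order[OF S]]
            card_of_Well_order] by blast
      then have "w \<le>o |underS w x|"
        using is_aleph_omega_least[OF w card_of_Card_order] is_aleph_unique[OF _ S] ordIso_ordLess_trans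
        by blast
      then show False using not_ordLess_ordLeq[OF card_of_underS[OF wC x]] by blast
    qed
    then obtain k where k: "|underS w x| \<le>o S k" by blast
    have "x \<in> underS w (a (Suc k))"
    proof (rule ccontr)
      assume "x \<notin> underS w (a (Suc k))"
      then have "(a (Suc k), x) \<in> w" by (rule Well_order_le_of_notin_underS[OF wo a(1) x])
      then have "underS w (a (Suc k)) \<subseteq> underS w x"
        using Well_order_underS_under_trans[OF wo] by blast
      then have "S (Suc k) \<le>o S k"
        using ordLeq_transitive[OF a(2) ordLeq_transitive[OF card_of_mono1 k]] by blast
      then show False using not_ordLess_ordLeq[OF is_aleph_Suc_ordLess[OF S S]] by blast
    qed
    then show ?thesis by blast
  qed
  then show thesis using that a(1) by blast
qed

lemma is_aleph_omega_countable_cover: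
  fixes w :: "'a rel" and S :: "nat \<Rightarrow> 'a rel" and P :: "'b set"
  assumes w: "is_aleph_omega w" and S: "\<And>m. is_aleph m (S m)" and P: "P \<noteq> {}" "|P| \<le>o w"
  obtains Y :: "nat \<Rightarrow> 'b set" where "P \<subseteq> (\<Union>k. Y k)" "\<And>k. |Y k| <o w"
proof -
  have wC: "Card_order w" by (rule is_aleph_omega_Card_order[OF w])
  obtain a :: "nat \<Rightarrow> 'a" where a: "range a \<subseteq> Field w" "Field w \<subseteq> (\<Union>k. underS w (a k))"
    using is_aleph_omega_cofinal_sequence[OF w S] by blast
  have "|P| \<le>o |Field w|"
    by (rule ordLeq_ordIso_trans[OF P(2) ordIso_symmetric[OF card_of_Field_ordIso[OF wC]]])
  then obtain h where h: "h ` Field w = P" using card_of_ordLeq2[OF P(1), where B = "Field w"] by blast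
  have "P = h ` Field w" using h by simp
  also have "\<dots> \<subseteq> h ` (\<Union>k. underS w (a k))" using a(2) by (rule image_mono)
  also have "\<dots> = (\<Union>k. h ` underS w (a k))" by (rule image_UN)
  finally have "P \<subseteq> (\<Union>k. h ` underS w (a k))" .
  moreover have "|h ` underS w (a k)| <o w" for k
    using ordLeq_ordLess_trans[OF card_of_image card_of_underS[OF wC]] a(1) by blast
  ultimately show thesis by (rule that)
qed

lemma is_aleph_omega_ordLess_Pow:
  fixes w :: "'a rel" and S :: "nat \<Rightarrow> 'a rel" and A :: "'b set"
  assumes w: "is_aleph_omega w" and S: "\<And>m. is_aleph m (S m)"
    and A: "\<not> finite A" and below: "\<And>m. S m <o |Pow A|"
  shows "w <o |Pow A|"
proof (rule ccontr)
  assume "\<not> w <o |Pow A|"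
  then have Pow_w: "|Pow A| \<le>o w"
    using not_ordLess_iff_ordLeq[OF card_of_Well_order
        card_order_on_well_order_on[OF is_aleph_omega_Card_order[OF w]]] by blast
  obtain p :: "'a rel" where p: "Card_order p" "p =o |Pow A|"
    using Card_order_ordIso_copy[OF card_of_Card_order Pow_w] by blast
  have "w \<le>o p"
  proof (rule is_aleph_omega_least[OF w p(1)])
    fix m and s :: "'a rel" assume "is_aleph m s"
    then have "s =o S m" by (rule is_aleph_unique[OF _ S])
    also have "S m <o |Pow A|" by (rule below)
    also have "|Pow A| =o p" by (rule ordIso_symmetric[OF p(2)])
    finally show "s <o p" .
  qed
  then have w_Pow: "w \<le>o |Pow A|" using p(2) by (rule ordLeq_ordIso_trans)
  have "Pow A \<noteq> {}" by blast
  then obtain Y :: "nat \<Rightarrow> 'b set set" where cover: "Pow A \<subseteq> (\<Union>k. Y k)" and small: "\<And>k. |Y k| <o w"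
    using is_aleph_omega_countable_cover[OF w S _ Pow_w] by blast
  have "|Y k| <o |Pow A|" for k using small w_Pow by (rule ordLess_ordLeq_trans)
  then show False using not_subset_UNION_of_smaller[OF card_of_Func_nat_Pow[OF A]] cover by blast
qed

section \<open>Clubs and diagonal intersections\<close>

definition diagonal_Inter :: "'a rel \<Rightarrow> ('a \<Rightarrow> 'a set) \<Rightarrow> 'a set" where
  "diagonal_Inter s E = {\<gamma> \<in> Field s. \<forall>\<delta>\<in>underS s \<gamma>. \<gamma> \<in> E \<delta>}"

lemma closed_Int: "closed s C \<Longrightarrow> closed s D \<Longrightarrow> closed s (C \<inter> D)"
  unfolding closed_def by blast

lemma closed_diagonal_Inter:
  assumes wo: "Well_order s" and E: "\<forall>\<delta>\<in>Field s. closed s (E \<delta>)"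
  shows "closed s (diagonal_Inter s E)"
  unfolding closed_def
proof (intro allI impI, elim conjE)
  fix B d assume B: "B \<subseteq> diagonal_Inter s E" "B \<noteq> {}" and lub: "is_lub s B d"
  have BF: "B \<subseteq> Field s" using B(1) unfolding diagonal_Inter_def by blast
  have "d \<in> E \<delta>" if \<delta>: "\<delta> \<in> underS s d" for \<delta>
  proof -
    have "{b \<in> B. \<delta> \<in> underS s b} \<subseteq> E \<delta>" using B(1) unfolding diagonal_Inter_def by blast
    moreover have "\<delta> \<in> Field s" using \<delta> underS_Field by fast
    ultimately show ?thesis
      using E is_lub_above_subset[OF wo lub BF \<delta>] unfolding closed_def by blast
  qed
  moreover have "d \<in> Field s" using lub unfolding is_lub_def by blast
  ultimately show "d \<in> diagonal_Inter s E" unfolding diagonal_Inter_def by blast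
qed

lemma club_choice_above:
  assumes "club s C"
  obtains f where "\<forall>x\<in>Field s. f x \<in> C \<and> x \<in> underS s (f x)"
proof -
  have "\<forall>x\<in>Field s. \<exists>y. y \<in> C \<and> x \<in> underS s y"
    using assms unfolding club_def unbounded_def underS_def by blast
  then show thesis using that by (elim bchoice[elim_format] exE)
qed

lemma is_lub_mem_closed:
  assumes wo: "Well_order s" and C: "closed s C" and lub: "is_lub s (range xs) d"
    and mono: "\<And>i j. i \<le> j \<Longrightarrow> (xs i, xs j) \<in> s"
    and y: "\<And>n. k \<le> n \<Longrightarrow> y n \<in> C \<and> (xs n, y n) \<in> s \<and> (y n, xs (Suc n)) \<in> s"
  shows "d \<in> C"
proof -
  have "is_lub s (y ` {k..}) d"
  proof (rule is_lub_interleaved[OF wo lub])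
    show "\<forall>b'\<in>y ` {k..}. \<exists>b\<in>range xs. (b', b) \<in> s" using y by blast
    show "\<forall>b\<in>range xs. \<exists>b'\<in>y ` {k..}. (b, b') \<in> s"
    proof
      fix b assume "b \<in> range xs"
      then obtain m where "b = xs m" by blast
      then have "(b, y (m + k)) \<in> s"
        using Well_order_trans[OF wo mono[of m "m + k"]] y[of "m + k"] by simp
      then show "\<exists>b'\<in>y ` {k..}. (b, b') \<in> s" by auto
    qed
  qed
  moreover have "y ` {k..} \<subseteq> C" "y ` {k..} \<noteq> {}" using y by auto
  ultimately show ?thesis using C unfolding closed_def by blast
qed

lemma unbounded_Int_diagonal_Inter:
  assumes s: "Card_order s" "regularCard s" "natLeq <o s"
    and C0: "club s C0" and E: "\<forall>\<delta>\<in>Field s. club s (E \<delta>)"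
  shows "unbounded s (C0 \<inter> diagonal_Inter s E)"
proof -
  have wo: "Well_order s" using s(1) by (rule card_order_on_well_order_on)
  have inf: "\<not> finite (Field s)" using s(3) by (rule natLeq_ordLess_infinite_Field)
  obtain f0 where f0: "\<forall>x\<in>Field s. f0 x \<in> C0 \<and> x \<in> underS s (f0 x)"
    using club_choice_above[OF C0] by blast
  have "\<forall>\<delta>\<in>Field s. \<exists>f. \<forall>x\<in>Field s. f x \<in> E \<delta> \<and> x \<in> underS s (f x)"
    using club_choice_above E by metis
  then obtain f where f: "\<forall>\<delta>\<in>Field s. \<forall>x\<in>Field s. f \<delta> x \<in> E \<delta> \<and> x \<in> underS s (f \<delta> x)"
    by (elim bchoice[elim_format] exE)
  txt \<open>Closing under K makes the supremum of an \<omega>-sequence a limit of points of C0 and of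
    every E \<delta> with \<delta> below it.\<close>
  define K where "K x = insert (f0 x) ((\<lambda>\<delta>. f \<delta> x) ` under s x)" for x
  have K: "\<forall>x\<in>Field s. K x \<subseteq> Field s \<and> |K x| <o s"
  proof
    fix x assume x: "x \<in> Field s"
    have "f \<delta> x \<in> Field s" if "\<delta> \<in> under s x" for \<delta>
      using f x under_Field[of s x] that E unfolding club_def by blast
    then have "K x \<subseteq> Field s" using f0 x C0 unfolding K_def club_def by blast
    moreover have "|K x| <o s" unfolding K_def
      by (rule card_of_insert_ordLess[OF s(1) inf
            ordLeq_ordLess_trans[OF card_of_image card_of_under_ordLess[OF s(1) inf x]]])
    ultimately show "K x \<subseteq> Field s \<and> |K x| <o s" ..
  qed
  show ?thesis unfolding unbounded_def
  proof
    fix a assume a: "a \<in> Field s"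
    obtain xs d where xsK: "\<And>n. K (xs n) \<subseteq> underS s (xs (Suc n))"
      and mono: "\<And>i j. i \<le> j \<Longrightarrow> (xs i, xs j) \<in> s" and lub: "is_lub s (range xs) d"
      and ad: "a \<in> underS s d"
      using regularCard_closing_sequence[OF s K a] by blast
    have xsF: "xs n \<in> Field s" for n by (rule FieldI1[OF mono[OF le_refl]])
    have "d \<in> C0"
    proof (rule is_lub_mem_closed[OF wo _ lub mono])
      show "closed s C0" using C0 unfolding club_def by blast
      show "f0 (xs n) \<in> C0 \<and> (xs n, f0 (xs n)) \<in> s \<and> (f0 (xs n), xs (Suc n)) \<in> s" for n
        using f0 xsF[of n] xsK[of n] unfolding K_def underS_def by blast
    qed
    moreover have "d \<in> E \<delta>" if \<delta>: "\<delta> \<in> underS s d" for \<delta>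
    proof -
      have \<delta>F: "\<delta> \<in> Field s" using \<delta> underS_Field by fast
      have "range xs \<subseteq> Field s" using xsF by blast
      then obtain k where "\<delta> \<in> underS s (xs k)" using is_lub_above_subset(1)[OF wo lub _ \<delta>] by blast
      then have k: "(\<delta>, xs k) \<in> s" unfolding underS_def by blast
      show ?thesis
      proof (rule is_lub_mem_closed[OF wo _ lub mono])
        show "closed s (E \<delta>)" using E \<delta>F unfolding club_def by blast
        fix n assume "k \<le> n"
        then have "\<delta> \<in> under s (xs n)" using Well_order_trans[OF wo k mono] unfolding under_def by blast
        then show "f \<delta> (xs n) \<in> E \<delta> \<and> (xs n, f \<delta> (xs n)) \<in> s \<and> (f \<delta> (xs n), xs (Suc n)) \<in> s"
          using f \<delta>F xsF[of n] xsK[of n] unfolding K_def underS_def by blast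
      qed
    qed
    ultimately show "\<exists>b\<in>C0 \<inter> diagonal_Inter s E. (a, b) \<in> s \<and> a \<noteq> b"
      using lub ad unfolding diagonal_Inter_def is_lub_def underS_def by blast
  qed
qed

lemma club_Int_diagonal_Inter:
  assumes s: "Card_order s" "regularCard s" "natLeq <o s"
    and C0: "club s C0" and E: "\<forall>\<delta>\<in>Field s. club s (E \<delta>)"
  shows "club s (C0 \<inter> diagonal_Inter s E)"
proof -
  have "closed s (diagonal_Inter s E)"
    using closed_diagonal_Inter[OF card_order_on_well_order_on[OF s(1)]] E unfolding club_def by blast
  then show ?thesis
    using C0 closed_Int unbounded_Int_diagonal_Inter[OF s C0 E] unfolding club_def by blast
qed

lemma Int_diagonal_Inter_subset:
  assumes wo: "Well_order s" and agree: "\<forall>\<delta>\<in>Field s. E \<delta> \<inter> under s \<delta> = C0 \<inter> under s \<delta>"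
    and \<delta>: "\<delta> \<in> Field s"
  shows "C0 \<inter> diagonal_Inter s E \<subseteq> E \<delta>"
proof
  fix \<gamma> assume \<gamma>: "\<gamma> \<in> C0 \<inter> diagonal_Inter s E"
  then have \<gamma>F: "\<gamma> \<in> Field s" unfolding diagonal_Inter_def by blast
  show "\<gamma> \<in> E \<delta>"
  proof (cases "\<delta> \<in> underS s \<gamma>")
    case True
    then show ?thesis using \<gamma> unfolding diagonal_Inter_def by blast
  next
    case False
    then have "\<gamma> \<in> under s \<delta>"
      using Well_order_le_of_notin_underS[OF wo \<gamma>F \<delta>] unfolding under_def by blast
    then show ?thesis using \<gamma> agree \<delta> by blast
  qed
qed

section \<open>Galvin's theorem at successor cardinals\<close>

lemma card_of_Sigma_Pow_under_cardSuc:
  assumes s: "Card_order s" and t: "Card_order t" "\<not> finite (Field t)" and st: "s =o cardSuc t"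
  shows "|SIGMA \<delta>:Field s. Pow (under s \<delta>)| \<le>o |Pow (Field t)|"
proof -
  have "|SIGMA \<delta>:Field s. Pow (under s \<delta>)| \<le>o |Field s \<times> Pow (Field t)|"
    by (rule card_of_Sigma_mono1) (use card_of_under_cardSuc[OF s t st] card_of_Pow_mono in blast)
  also have "|Field s \<times> Pow (Field t)| \<le>o |Pow (Field t) \<times> Pow (Field t)|"
    by (rule card_of_Times_mono1[OF card_of_Field_cardSuc_ordLeq_Pow[OF s t(1) st]])
  also have "|Pow (Field t) \<times> Pow (Field t)| =o |Pow (Field t)|"
    by (rule card_of_Times_same_infinite) (use t(2) in simp)
  finally show ?thesis .
qed

lemma frequent_trace_exists:
  fixes s t :: "'a rel" and C :: "'i \<Rightarrow> 'a set"
  assumes s: "Card_order s" and t: "Card_order t" "\<not> finite (Field t)" and st: "s =o cardSuc t"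
    and L: "|Pow (Field t)| <o |L|"
  obtains \<beta>0 where "\<beta>0 \<in> L"
    "\<forall>\<delta>\<in>Field s. s \<le>o |{\<beta> \<in> L. C \<beta> \<inter> under s \<delta> = C \<beta>0 \<inter> under s \<delta>}|"
proof -
  let ?P = "Pow (Field t)"
  let ?T = "\<lambda>\<beta>0 \<delta>. {\<beta> \<in> L. C \<beta> \<inter> under s \<delta> = C \<beta>0 \<inter> under s \<delta>}"
  have "\<exists>\<beta>0\<in>L. \<forall>\<delta>\<in>Field s. s \<le>o |?T \<beta>0 \<delta>|"
  proof (rule ccontr)
    assume "\<not> ?thesis"
    then have "\<forall>\<beta>\<in>L. \<exists>\<delta>\<in>Field s. |?T \<beta> \<delta>| <o s"
      by (simp add: not_ordLeq_iff_ordLess[OF card_of_Well_order card_order_on_well_order_on[OF s]])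
    then have "\<forall>\<beta>\<in>L. \<exists>\<delta>. \<delta> \<in> Field s \<and> |?T \<beta> \<delta>| <o s" by blast
    then obtain dl where dl: "\<forall>\<beta>\<in>L. dl \<beta> \<in> Field s \<and> |?T \<beta> (dl \<beta>)| <o s"
      by (elim bchoice[elim_format] exE)
    txt \<open>The map g has fibres of size below s and at most 2^t values, so |L| \<le> 2^t.\<close>
    define g where "g \<beta> = (dl \<beta>, C \<beta> \<inter> under s (dl \<beta>))" for \<beta>
    have P_inf: "\<not> finite ?P" using t(2) by simp
    have s_P: "|Field s| \<le>o |?P|" by (rule card_of_Field_cardSuc_ordLeq_Pow[OF s t(1) st])
    have fibre: "|{\<beta> \<in> L. g \<beta> = p}| \<le>o |?P|" if "p \<in> g ` L" for p
    proof -
      obtain \<beta> where \<beta>: "\<beta> \<in> L" "p = g \<beta>" using \<open>p \<in> g ` L\<close> by blast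
      have "{\<beta>' \<in> L. g \<beta>' = p} \<subseteq> ?T \<beta> (dl \<beta>)"
      proof
        fix \<beta>' assume "\<beta>' \<in> {\<beta>' \<in> L. g \<beta>' = p}"
        then have "\<beta>' \<in> L" and eq: "g \<beta>' = g \<beta>" using \<beta>(2) by simp_all
        moreover have "dl \<beta>' = dl \<beta>" using eq unfolding g_def prod.inject by (rule conjunct1)
        moreover have "C \<beta>' \<inter> under s (dl \<beta>') = C \<beta> \<inter> under s (dl \<beta>)"
          using eq unfolding g_def prod.inject by (rule conjunct2)
        ultimately show "\<beta>' \<in> ?T \<beta> (dl \<beta>)" by simp
      qed
      then have "|{\<beta>' \<in> L. g \<beta>' = p}| <o s"
        by (rule ordLeq_ordLess_trans[OF card_of_mono1]) (use dl \<beta>(1) in blast)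
      also have "s =o |Field s|" by (rule ordIso_symmetric[OF card_of_Field_ordIso[OF s]])
      finally show ?thesis using s_P by (rule ordLeq_transitive[OF ordLess_imp_ordLeq])
    qed
    have "g ` L \<subseteq> (SIGMA \<delta>:Field s. Pow (under s \<delta>))" using dl unfolding g_def by auto
    then have image: "|g ` L| \<le>o |?P|"
      by (rule ordLeq_transitive[OF card_of_mono1 card_of_Sigma_Pow_under_cardSuc[OF s t st]])
    have "L = (\<Union>p\<in>g ` L. {\<beta> \<in> L. g \<beta> = p})" by blast
    also have "|\<Union>p\<in>g ` L. {\<beta> \<in> L. g \<beta> = p}| \<le>o |?P|"
      using card_of_UNION_ordLeq_infinite[OF P_inf image, where A = "\<lambda>p. {\<beta> \<in> L. g \<beta> = p}"]
        fibre by blast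
    finally show False using not_ordLess_ordLeq[OF L] by blast
  qed
  then show thesis using that by blast
qed

lemma inj_on_choice_from_large_sets:
  fixes s :: "'a rel" and T :: "'a \<Rightarrow> 'b set"
  assumes s: "Card_order s" and large: "\<forall>\<delta>\<in>Field s. s \<le>o |T \<delta>|"
  obtains \<alpha> where "inj_on \<alpha> (Field s)" "\<forall>\<delta>\<in>Field s. \<alpha> \<delta> \<in> T \<delta>"
proof -
  interpret wo_rel s using s by (simp add: wo_rel_def card_order_on_well_order_on)
  define H where "H f \<delta> = (SOME \<beta>. \<beta> \<in> T \<delta> \<and> \<beta> \<notin> f ` underS \<delta>)" for f and \<delta>
  define \<alpha> where "\<alpha> = worec H"
  have "adm_wo H" unfolding adm_wo_def
  proof (intro allI impI)
    fix f g :: "'a \<Rightarrow> 'b" and x assume "\<forall>y\<in>underS x. f y = g y"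
    then have "f ` underS x = g ` underS x" by (intro image_cong) simp_all
    then show "H f x = H g x" unfolding H_def by simp
  qed
  then have \<alpha>_eq: "\<alpha> \<delta> = H \<alpha> \<delta>" for \<delta> unfolding \<alpha>_def by (metis worec_fixpoint)
  have \<alpha>: "\<alpha> \<delta> \<in> T \<delta> \<and> \<alpha> \<delta> \<notin> \<alpha> ` underS \<delta>" if \<delta>: "\<delta> \<in> Field s" for \<delta>
  proof -
    have "|\<alpha> ` underS \<delta>| <o s"
      by (rule ordLeq_ordLess_trans[OF card_of_image card_of_underS[OF s \<delta>]])
    then have "\<not> T \<delta> \<subseteq> \<alpha> ` underS \<delta>"
      using large \<delta> by (metis card_of_mono1 not_ordLess_ordLeq ordLeq_transitive)
    then have "\<exists>\<beta>. \<beta> \<in> T \<delta> \<and> \<beta> \<notin> \<alpha> ` underS \<delta>" by blast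
    then show ?thesis unfolding \<alpha>_eq[of \<delta>] H_def by (rule someI_ex)
  qed
  have "inj_on \<alpha> (Field s)"
  proof (rule inj_onI, rule ccontr)
    fix x y assume x: "x \<in> Field s" and y: "y \<in> Field s" and eq: "\<alpha> x = \<alpha> y" and "x \<noteq> y"
    then have "x \<in> underS y \<or> y \<in> underS x" using TOTALS unfolding underS_def by blast
    then have "\<alpha> x \<in> \<alpha> ` underS y \<or> \<alpha> y \<in> \<alpha> ` underS x" by blast
    then show False using \<alpha>[OF x] \<alpha>[OF y] eq by simp
  qed
  then show thesis using that \<alpha> by blast
qed

theorem Gal_Cub_cardSuc:
  fixes s t :: "'a rel" and L :: "'i set"
  assumes s: "Card_order s" and t: "Card_order t" "\<not> finite (Field t)" and st: "s =o cardSuc t"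
    and L: "|Pow (Field t)| <o |L|"
  shows "Gal (Cub s) s L"
  unfolding Gal_def
proof (intro allI impI)
  fix A :: "'i \<Rightarrow> 'a set" assume A: "\<forall>i\<in>L. A i \<in> Cub s"
  have wo: "Well_order s" using s by (rule card_order_on_well_order_on)
  have unc: "natLeq <o s" by (rule natLeq_ordLess_cardSuc[OF t st])
  have "\<forall>i\<in>L. \<exists>C. club s C \<and> C \<subseteq> A i" using A unfolding Cub_def by blast
  then obtain C where C: "\<forall>i\<in>L. club s (C i) \<and> C i \<subseteq> A i" by (elim bchoice[elim_format] exE)
  obtain \<beta>0 where \<beta>0: "\<beta>0 \<in> L"
    and frequent: "\<forall>\<delta>\<in>Field s. s \<le>o |{\<beta> \<in> L. C \<beta> \<inter> under s \<delta> = C \<beta>0 \<inter> under s \<delta>}|"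
    using frequent_trace_exists[OF s t st L] by blast
  obtain \<alpha> where \<alpha>_inj: "inj_on \<alpha> (Field s)"
    and \<alpha>: "\<forall>\<delta>\<in>Field s. \<alpha> \<delta> \<in> {\<beta> \<in> L. C \<beta> \<inter> under s \<delta> = C \<beta>0 \<inter> under s \<delta>}"
    using inj_on_choice_from_large_sets[OF s frequent] by blast
  define D where "D = C \<beta>0 \<inter> diagonal_Inter s (\<lambda>\<delta>. C (\<alpha> \<delta>))"
  have "club s D" unfolding D_def
    by (rule club_Int_diagonal_Inter[OF s cardSuc_regularCard[OF t st] unc]) (use C \<beta>0 \<alpha> in blast)+
  have D_A: "D \<subseteq> A (\<alpha> \<delta>)" if \<delta>: "\<delta> \<in> Field s" for \<delta>
  proof -
    have "D \<subseteq> C (\<alpha> \<delta>)" unfolding D_def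
      by (rule Int_diagonal_Inter_subset[OF wo _ \<delta>]) (use \<alpha> in simp)
    then show ?thesis using C \<alpha> \<delta> by blast
  qed
  have "|Field s| =o |\<alpha> ` Field s|" using \<alpha>_inj card_of_ordIso inj_on_imp_bij_betw by blast
  then have card_I: "|\<alpha> ` Field s| =o s"
    by (rule ordIso_transitive[OF ordIso_symmetric card_of_Field_ordIso[OF s]])
  obtain \<delta>0 where \<delta>0: "\<delta>0 \<in> Field s"
    using natLeq_ordLess_infinite_Field[OF unc] by (metis finite.emptyI ex_in_conv)
  have "\<Inter>(A ` \<alpha> ` Field s) \<subseteq> Field s"
    using \<delta>0 A \<alpha> unfolding Cub_def by blast
  then have "\<Inter>(A ` \<alpha> ` Field s) \<in> Cub s"
    using \<open>club s D\<close> D_A unfolding Cub_def by blast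
  moreover have "\<alpha> ` Field s \<subseteq> L" using \<alpha> by blast
  ultimately show "\<exists>I\<subseteq>L. |I| =o s \<and> \<Inter>(A ` I) \<in> Cub s" using card_I by blast
qed

lemma Pow_Field_ordLeq_if_not_Gal:
  fixes s t :: "'a rel"
  assumes t: "is_aleph k t" and s: "is_aleph (Suc k) s" and not_Gal: "\<not> Gal (Cub s) s (Pow (Field s))"
  shows "|Pow (Field s)| \<le>o |Pow (Field t)|"
proof (rule ccontr)
  assume "\<not> ?thesis"
  then have lt: "|Pow (Field t)| <o |Pow (Field s)|"
    using not_ordLeq_iff_ordLess[OF card_of_Well_order card_of_Well_order] by blast
  obtain t' :: "'a rel" where t': "is_aleph k t'" "s =o cardSuc t'" using s by auto
  have "|Pow (Field t')| =o |Pow (Field t)|"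
    by (rule card_of_Pow_cong[OF card_of_cong[OF is_aleph_unique[OF t'(1) t]]])
  then have "|Pow (Field t')| <o |Pow (Field s)|" using lt by (rule ordIso_ordLess_trans)
  then have "Gal (Cub s) s (Pow (Field s))"
    by (rule Gal_Cub_cardSuc[OF is_aleph_Card_order[OF s] is_aleph_Card_order[OF t'(1)]
          is_aleph_infinite[OF t'(1)] t'(2)])
  then show False using not_Gal by blast
qed

lemma Pow_Field_is_aleph_ordLeq:
  fixes S :: "nat \<Rightarrow> 'a rel"
  assumes S: "\<And>m. is_aleph m (S m)"
    and not_Gal: "\<And>m. n < m \<Longrightarrow> \<not> Gal (Cub (S m)) (S m) (Pow (Field (S m)))" and "n \<le> k"
  shows "|Pow (Field (S k))| \<le>o |Pow (Field (S n))|"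
  using \<open>n \<le> k\<close>
proof (induction k rule: dec_induct)
  case base
  show ?case by (rule ordLeq_refl[OF card_of_Card_order])
next
  case (step k)
  have "|Pow (Field (S (Suc k)))| \<le>o |Pow (Field (S k))|"
    using not_Gal[of "Suc k"] step.hyps(1) by (intro Pow_Field_ordLeq_if_not_Gal[OF S S]) simp
  then show ?case using step.IH by (rule ordLeq_transitive)
qed

lemma is_aleph_ordLess_Pow_Field:
  fixes S :: "nat \<Rightarrow> 'a rel"
  assumes S: "\<And>m. is_aleph m (S m)"
    and Pow_S: "\<And>k. n \<le> k \<Longrightarrow> |Pow (Field (S k))| \<le>o |Pow (Field (S n))|"
  shows "S m <o |Pow (Field (S n))|"
proof -
  have "S m \<le>o S (m + n)" by (rule is_aleph_mono[OF _ S S]) simp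
  also have "S (m + n) =o |Field (S (m + n))|"
    by (rule ordIso_symmetric[OF card_of_Field_ordIso[OF is_aleph_Card_order[OF S]]])
  also have "|Field (S (m + n))| <o |Pow (Field (S (m + n)))|" by (rule card_of_Pow)
  also have "|Pow (Field (S (m + n)))| \<le>o |Pow (Field (S n))|" by (rule Pow_S) simp
  finally show ?thesis .
qed

theorem proposition4p14:
  fixes n :: nat and r w :: "'a rel"
  assumes "1 \<le> n"
    and "is_aleph n r"
    and "is_aleph_omega w"
    and "\<forall>m\<ge>n. \<forall>s::'a rel. is_aleph m s \<longrightarrow> \<not> Gal (Cub s) s (Pow (Field s))"
  shows "ordLess2 w (card_of (Pow (Field r))) \<and> \<not> strong_limit w"
proof -
  have r_w: "r <o w" by (rule is_aleph_omega_greater[OF assms(3,2)])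
  have "natLeq \<le>o w"
    by (rule ordLess_imp_ordLeq[OF ordLeq_ordLess_trans[OF natLeq_ordLeq_is_aleph[OF assms(2)] r_w]])
  then obtain S :: "nat \<Rightarrow> 'a rel" where S: "\<And>m. is_aleph m (S m)"
    using is_aleph_exists[OF assms(3)] by metis
  have not_Gal: "\<not> Gal (Cub (S m)) (S m) (Pow (Field (S m)))" if "n < m" for m
    by (rule assms(4)[rule_format, OF _ S]) (use that in simp)
  have Pow_S: "|Pow (Field (S k))| \<le>o |Pow (Field (S n))|" if "n \<le> k" for k
    by (rule Pow_Field_is_aleph_ordLeq[OF S not_Gal that])
  have Sn_r: "|Pow (Field (S n))| =o |Pow (Field r)|"
    by (rule card_of_Pow_cong[OF card_of_cong[OF is_aleph_unique[OF S assms(2)]]])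
  have "S m <o |Pow (Field (S n))|" for m by (rule is_aleph_ordLess_Pow_Field[OF S Pow_S])
  then have "S m <o |Pow (Field r)|" for m using Sn_r by (rule ordLess_ordIso_trans)
  then have w_Pow: "w <o |Pow (Field r)|"
    by (rule is_aleph_omega_ordLess_Pow[OF assms(3) S is_aleph_infinite[OF assms(2)]])
  moreover have "\<not> strong_limit w"
    using w_Pow r_w is_aleph_Card_order[OF assms(2)] not_ordLess_ordLeq ordLess_imp_ordLeq
    unfolding strong_limit_def by blast
  ultimately show ?thesis by blast
qed

end
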